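(* Let $S=(\mathcal{E},\Sigma,X,\mathcal{O})$ be an entity. Then $S$ is central atomic (i.e. for $(e,p),(f,q)\in\mathcal{E}\times\Sigma$, $O(e,p)\subseteq O(f,q)$ implies $(e,p)=(f,q)$) if and only if the central eigen closure operator $cl_{eig}$ on $\mathcal{E}\times\Sigma$ satisfies the $T_1$ separation axiom.
   Context: An entity $S=(\mathcal{E},\Sigma,X,\mathcal{O})$ consists of a set $\mathcal{E}$, a set $\Sigma$, and for each $e\in\mathcal{E}$, $p\in\Sigma$ a nonempty set $O(e,p)$, with $X=\bigcup_{e,p}O(e,p)$. The central eigen map $eig:\mathcal{P}(X)\to\mathcal{P}(\mathcal{E}\times\Sigma)$ is $(e,p)\in eig(A)\iff O(e,p)\subseteq A$; $\mathcal{Y}_{eig}=\{eig(A):A\subseteq X\}$ and $cl_{eig}(K)=\bigcap\{Y\in\mathcal{Y}_{eig}:K\subseteq Y\}$. A closure operator $cl$ on $W$ satisfies $T_1$ iff $cl(\{w\})=\{w\}$ for every $w\in W$. *)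

theory Defs
  imports Main
begin

text \<open>An entity S = (E, Sigma, X, Ob): sets E and Sigma, and for each e in E, p in Sigma
  a nonempty outcome set Ob e p; X is the union of all Ob e p.\<close>

definition entity :: "'e set \<Rightarrow> 'p set \<Rightarrow> ('e \<Rightarrow> 'p \<Rightarrow> 'x set) \<Rightarrow> bool" where
  "entity E Sig Ob \<longleftrightarrow> (\<forall>e\<in>E. \<forall>p\<in>Sig. Ob e p \<noteq> {})"

definition outcomes :: "'e set \<Rightarrow> 'p set \<Rightarrow> ('e \<Rightarrow> 'p \<Rightarrow> 'x set) \<Rightarrow> 'x set" where
  "outcomes E Sig Ob = (\<Union>e\<in>E. \<Union>p\<in>Sig. Ob e p)"

definition eig :: "'e set \<Rightarrow> 'p set \<Rightarrow> ('e \<Rightarrow> 'p \<Rightarrow> 'x set) \<Rightarrow> 'x set \<Rightarrow> ('e \<times> 'p) set" where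
  "eig E Sig Ob A = {(e, p) \<in> E \<times> Sig. Ob e p \<subseteq> A}"

definition eig_closed_sets :: "'e set \<Rightarrow> 'p set \<Rightarrow> ('e \<Rightarrow> 'p \<Rightarrow> 'x set) \<Rightarrow> ('e \<times> 'p) set set" where
  "eig_closed_sets E Sig Ob = {eig E Sig Ob A | A. A \<subseteq> outcomes E Sig Ob}"

definition cl_eig :: "'e set \<Rightarrow> 'p set \<Rightarrow> ('e \<Rightarrow> 'p \<Rightarrow> 'x set) \<Rightarrow> ('e \<times> 'p) set \<Rightarrow> ('e \<times> 'p) set" where
  "cl_eig E Sig Ob K = \<Inter>{Y \<in> eig_closed_sets E Sig Ob. K \<subseteq> Y}"

definition T1_closure :: "'w set \<Rightarrow> ('w set \<Rightarrow> 'w set) \<Rightarrow> bool" where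
  "T1_closure W cl \<longleftrightarrow> (\<forall>w\<in>W. cl {w} = {w})"

definition central_atomic :: "'e set \<Rightarrow> 'p set \<Rightarrow> ('e \<Rightarrow> 'p \<Rightarrow> 'x set) \<Rightarrow> bool" where
  "central_atomic E Sig Ob \<longleftrightarrow>
     (\<forall>e\<in>E. \<forall>p\<in>Sig. \<forall>f\<in>E. \<forall>q\<in>Sig. Ob e p \<subseteq> Ob f q \<longrightarrow> (e, p) = (f, q))"

end

theory Submission
  imports Defs
begin

text \<open>The eigen closure of a point (e, p) consists of the pairs whose outcome set lies in
  Ob e p, so all points are closed exactly when no outcome set is contained in another one.\<close>

lemma eig_mono: "A \<subseteq> B \<Longrightarrow> eig E Sig Ob A \<subseteq> eig E Sig Ob B"
  unfolding eig_def by auto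

lemma eig_in_eig_closed_sets:
  "A \<subseteq> outcomes E Sig Ob \<Longrightarrow> eig E Sig Ob A \<in> eig_closed_sets E Sig Ob"
  unfolding eig_closed_sets_def by blast

lemma cl_eig_eq_eig_Union:
  assumes "K \<subseteq> E \<times> Sig"
  shows "cl_eig E Sig Ob K = eig E Sig Ob (\<Union>(e, p)\<in>K. Ob e p)"
    (is "_ = eig E Sig Ob ?U")
proof
  have "?U \<subseteq> outcomes E Sig Ob"
    using assms unfolding outcomes_def by blast
  moreover have "K \<subseteq> eig E Sig Ob ?U"
    using assms unfolding eig_def by blast
  ultimately show "cl_eig E Sig Ob K \<subseteq> eig E Sig Ob ?U"
    unfolding cl_eig_def by (blast intro: eig_in_eig_closed_sets)
next
  have "eig E Sig Ob ?U \<subseteq> eig E Sig Ob A" if "K \<subseteq> eig E Sig Ob A" for A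
    using that by (intro eig_mono) (auto simp: eig_def)
  then show "eig E Sig Ob ?U \<subseteq> cl_eig E Sig Ob K"
    unfolding cl_eig_def eig_closed_sets_def by blast
qed

lemma cl_eig_singleton:
  "(e, p) \<in> E \<times> Sig \<Longrightarrow> cl_eig E Sig Ob {(e, p)} = eig E Sig Ob (Ob e p)"
  by (simp add: cl_eig_eq_eig_Union)

lemma eig_Ob_eq_singleton_iff:
  assumes "e \<in> E" "p \<in> Sig"
  shows "eig E Sig Ob (Ob e p) = {(e, p)} \<longleftrightarrow>
    (\<forall>f\<in>E. \<forall>q\<in>Sig. Ob f q \<subseteq> Ob e p \<longrightarrow> (f, q) = (e, p))"
  using assms unfolding eig_def by auto

lemma T1_closure_cl_eig_iff:
  "T1_closure (E \<times> Sig) (cl_eig E Sig Ob) \<longleftrightarrow>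
    (\<forall>e\<in>E. \<forall>p\<in>Sig. eig E Sig Ob (Ob e p) = {(e, p)})"
  unfolding T1_closure_def by (simp add: cl_eig_singleton)

theorem mainTheorem4:
  fixes E :: "'e set" and Sig :: "'p set" and Ob :: "'e \<Rightarrow> 'p \<Rightarrow> 'x set"
  assumes "entity E Sig Ob"
  shows "central_atomic E Sig Ob \<longleftrightarrow> T1_closure (E \<times> Sig) (cl_eig E Sig Ob)"
proof -
  have "T1_closure (E \<times> Sig) (cl_eig E Sig Ob) \<longleftrightarrow>
      (\<forall>e\<in>E. \<forall>p\<in>Sig. \<forall>f\<in>E. \<forall>q\<in>Sig. Ob f q \<subseteq> Ob e p \<longrightarrow> (f, q) = (e, p))"
    by (simp add: T1_closure_cl_eig_iff eig_Ob_eq_singleton_iff)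
  then show ?thesis
    unfolding central_atomic_def by auto
qed

end
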